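(* Let $a_0,a_1,a_2\ge0$ with $a_1\ge a_2$, and let $\Delta t\in(0,3/(4a_0)]$ (any $\Delta t>0$ if $a_0=0$). Let $\{x_n\}_{n\ge0}$, $\{y_n\}_{n\ge1}$, $\{z_n\}_{n\ge2}$, $\{b_n\}_{n\ge2}$ be non-negative sequences such that $$\frac1{\Delta t}\Big(\tfrac32x_n-2x_{n-1}+\tfrac12x_{n-2}+y_n-y_{n-1}\Big)+z_n\le a_0x_n+a_1x_{n-1}+a_2x_{n-2}+b_n\quad\forall n\ge2.$$ Then, with $a_*:=a_0+a_1+a_2$, for all $n\ge2$, $$x_n+\tfrac23y_n+\tfrac23\Delta t\sum_{i=2}^nz_i\le\big(\exp(2a_*n\Delta t)+1\big)\Big(x_0+\tfrac32x_1+y_1+\Delta t\sum_{i=2}^nb_i\Big).$$ *)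

theory Defs
  imports Complex_Main
begin

end

theory Submission
  imports Defs
begin

text \<open>Multiplying the scheme by \<open>dt\<close> and telescoping \<open>w n = 3/2 x n - 1/2 x (n - 1) + y n\<close>
  bounds \<open>L n = x n + 2/3 (y n + dt \<Sum> z)\<close> through
  \<open>(3/2 - g) L n \<le> x (n - 1) / 2 + B + \<alpha> \<Sum>{i<n} x i\<close>, where \<open>g = a0 dt \<le> 3/4\<close>,
  \<open>\<alpha> = (a0 + a1 + a2) dt\<close> and \<open>B\<close> collects the data. Strong induction then gives
  \<open>x k \<le> t^k B\<close> with \<open>t = exp (2 \<alpha>)\<close>: the geometric sum \<open>\<alpha> \<Sum> t^i\<close> is at most
  \<open>(t^n - 1) / 2\<close> because \<open>1 + 2 \<alpha> \<le> t\<close>, and the implicit factor \<open>3/2 - g\<close> is absorbed because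
  \<open>(1 - g) exp (2 g) \<ge> 1\<close> for \<open>g \<le> 3/4\<close>. This even proves the bound without the summand \<open>+1\<close>.\<close>

lemma one_le_one_minus_mult_exp_double:
  fixes g :: real
  assumes "0 \<le> g" "g \<le> 3/4"
  shows "1 \<le> (1 - g) * exp (2 * g)"
proof -
  have taylor: "1 + g + g^2/2 \<le> exp g"
    using exp_lower_Taylor_quadratic assms by simp
  have "(1 + g + g^2/2)^2 \<le> (exp g)^2"
    using taylor assms by (intro power_mono) auto
  also have "\<dots> = exp (2 * g)"
    by (simp add: power2_eq_square flip: exp_add)
  finally have exp_bound: "(1 + g + g^2/2)^2 \<le> exp (2 * g)" .
  have "g^2 \<le> (3/4)^2" "g^3 \<le> (3/4)^3" "g^4 \<le> (3/4)^4"
    using assms by (intro power_mono; simp)+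
  then have "0 \<le> g * (1 - g^2 - 3/4 * g^3 - 1/4 * g^4)"
    using assms by (intro mult_nonneg_nonneg) (auto simp: power_divide)
  also have "\<dots> = (1 - g) * (1 + g + g^2/2)^2 - 1"
    by (simp add: power2_eq_square power3_eq_cube power4_eq_xxxx field_simps)
  finally have "1 \<le> (1 - g) * (1 + g + g^2/2)^2"
    by simp
  also have "\<dots> \<le> (1 - g) * exp (2 * g)"
    using exp_bound assms by (intro mult_left_mono) auto
  finally show ?thesis .
qed

lemma mult_geometric_sum_le:
  fixes a t :: real
  assumes "0 \<le> a" "1 + 2 * a \<le> t"
  shows "a * (\<Sum>i<n. t ^ i) \<le> (t ^ n - 1) / 2"
proof (induction n)
  case 0
  then show ?case by simp
next
  case (Suc n)
  have "a * t ^ n \<le> (t - 1) / 2 * t ^ n"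
    using assms by (intro mult_right_mono) auto
  with Suc show ?case by (simp add: algebra_simps)
qed

lemma bdf2_telescoped:
  fixes a0 a1 a2 dt :: real and x y z b :: "nat \<Rightarrow> real"
  assumes "0 \<le> a0" "0 \<le> a1" "0 \<le> a2" "0 < dt"
    and "\<And>n. 0 \<le> x n" "\<And>n. 2 \<le> n \<Longrightarrow> 0 \<le> b n"
    and scheme: "\<And>n. 2 \<le> n \<Longrightarrow>
      (1 / dt) * (3/2 * x n - 2 * x (n - 1) + 1/2 * x (n - 2) + y n - y (n - 1)) + z n
        \<le> a0 * x n + a1 * x (n - 1) + a2 * x (n - 2) + b n"
    and "1 \<le> n" "n \<le> N"
  shows "3/2 * x n + y n + dt * (\<Sum>i=2..n. z i)
    \<le> 1/2 * x (n - 1) + (x 0 + 3/2 * x 1 + y 1 + dt * (\<Sum>i=2..N. b i))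
       + a0 * dt * x n + (a0 + a1 + a2) * dt * (\<Sum>i<n. x i)"
proof -
  define w where "w k = 3/2 * x k - 1/2 * x (k - 1) + y k" for k
  have step: "w k - w (k - 1) + dt * z k \<le> dt * (a0 * x k + a1 * x (k - 1) + a2 * x (k - 2) + b k)"
    if "2 \<le> k" for k
  proof -
    have "dt * ((1 / dt) * (3/2 * x k - 2 * x (k - 1) + 1/2 * x (k - 2) + y k - y (k - 1)) + z k)
        \<le> dt * (a0 * x k + a1 * x (k - 1) + a2 * x (k - 2) + b k)"
      using scheme[OF that] \<open>0 < dt\<close> by (intro mult_left_mono) auto
    moreover have "k - 1 - 1 = k - 2" by simp
    ultimately show ?thesis
      using \<open>0 < dt\<close> unfolding w_def by (simp add: algebra_simps)
  qed
  \<comment> \<open>With the coefficients \<open>a0\<close>, \<open>a0 + a1\<close> kept apart, the induction step is exact.\<close>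
  have invariant: "w (Suc k) + dt * (\<Sum>i=2..Suc k. z i) \<le> w 1 + dt * (\<Sum>i=2..Suc k. b i)
      + dt * (a0 * x (Suc k) + (a0 + a1) * x k + (a0 + a1 + a2) * (\<Sum>i<k. x i))" for k
  proof (induction k)
    case 0
    have "0 \<le> dt * (a0 * x 1 + (a0 + a1) * x 0)"
      using assms by (intro mult_nonneg_nonneg add_nonneg_nonneg) auto
    then show ?case by simp
  next
    case (Suc k)
    show ?case
      using Suc.IH step[of "Suc (Suc k)"] by (simp add: sum.cl_ivl_Suc algebra_simps)
  qed
  obtain k where k: "n = Suc k"
    using \<open>1 \<le> n\<close> by (cases n) auto
  have "dt * (a0 * x (Suc k) + (a0 + a1) * x k + (a0 + a1 + a2) * (\<Sum>i<k. x i))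
      \<le> a0 * dt * x (Suc k) + (a0 + a1 + a2) * dt * (\<Sum>i<Suc k. x i)"
    using assms by (simp add: algebra_simps mult_left_mono)
  moreover have "dt * (\<Sum>i=2..n. b i) \<le> dt * (\<Sum>i=2..N. b i)"
    using assms by (intro mult_left_mono sum_mono2) auto
  ultimately show ?thesis
    using invariant[of k] assms(5)[of 0] unfolding k w_def by simp
qed

lemma bdf2_gronwall:
  fixes x L :: "nat \<Rightarrow> real" and g \<alpha> B :: real
  assumes "0 \<le> g" "g \<le> 3/4" "g \<le> \<alpha>" "0 \<le> B" "x 0 \<le> B" "x 1 \<le> B"
    and x_le_L: "\<And>n. 2 \<le> n \<Longrightarrow> x n \<le> L n"
    and recurrence: "\<And>n. 2 \<le> n \<Longrightarrow> n \<le> N \<Longrightarrow>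
      (3/2 - g) * L n \<le> 1/2 * x (n - 1) + B + \<alpha> * (\<Sum>i<n. x i)"
    and "2 \<le> n" "n \<le> N"
  shows "L n \<le> exp (2 * \<alpha>) ^ n * B"
proof -
  define t where "t = exp (2 * \<alpha>)"
  have "0 \<le> \<alpha>" using assms by linarith
  have t_ge: "1 + 2 * \<alpha> \<le> t"
    unfolding t_def by (rule exp_ge_add_one_self)
  then have "1 \<le> t" using \<open>0 \<le> \<alpha>\<close> by linarith
  have implicit_absorbed: "1 \<le> (1 - g) * t"
  proof -
    have "1 \<le> (1 - g) * exp (2 * g)"
      using one_le_one_minus_mult_exp_double assms by blast
    also have "\<dots> \<le> (1 - g) * t"
      unfolding t_def using assms by (intro mult_left_mono) auto
    finally show ?thesis .
  qed
  have L_step: "L n \<le> t ^ n * B"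
    if "2 \<le> n" "n \<le> N" and below: "\<And>k. k < n \<Longrightarrow> x k \<le> t ^ k * B" for n
  proof -
    have "\<alpha> * (\<Sum>i<n. x i) \<le> \<alpha> * (\<Sum>i<n. t ^ i * B)"
      using below \<open>0 \<le> \<alpha>\<close> by (intro mult_left_mono sum_mono) auto
    also have "\<dots> = B * (\<alpha> * (\<Sum>i<n. t ^ i))"
      by (simp add: sum_distrib_left sum_distrib_right algebra_simps)
    also have "\<dots> \<le> B * ((t ^ n - 1) / 2)"
      using mult_geometric_sum_le[OF \<open>0 \<le> \<alpha>\<close> t_ge] \<open>0 \<le> B\<close> by (intro mult_left_mono) auto
    finally have geometric: "\<alpha> * (\<Sum>i<n. x i) \<le> B * ((t ^ n - 1) / 2)" .
    have "(3/2 - g) * L n \<le> 1/2 * (t ^ (n - 1) * B) + B + B * ((t ^ n - 1) / 2)"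
      using recurrence[OF that(1,2)] below[of "n - 1"] geometric that(1) by simp
    also have "\<dots> = B * (1/2 * t ^ (n - 1) + 1 + (t ^ n - 1) / 2)"
      by (simp add: algebra_simps)
    also have "\<dots> \<le> B * ((3/2 - g) * t ^ n)"
    proof -
      have "1 \<le> t ^ (n - 1)"
        using \<open>1 \<le> t\<close> by simp
      then have "t ^ (n - 1) \<le> (1 - g) * t * t ^ (n - 1)"
        using implicit_absorbed by (simp add: mult_right_mono)
      also have "\<dots> = (1 - g) * t ^ n"
        using that(1) by (simp flip: power_Suc)
      finally have "1/2 * t ^ (n - 1) + 1 + (t ^ n - 1) / 2 \<le> (3/2 - g) * t ^ n"
        using \<open>1 \<le> t ^ (n - 1)\<close> by (simp add: field_simps)
      then show ?thesis using \<open>0 \<le> B\<close> by (intro mult_left_mono)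
    qed
    finally have "(3/2 - g) * L n \<le> (3/2 - g) * (t ^ n * B)"
      by (simp add: algebra_simps)
    moreover have "0 < 3/2 - g"
      using \<open>g \<le> 3/4\<close> by simp
    ultimately show ?thesis
      by (rule mult_left_le_imp_le)
  qed
  have "x k \<le> t ^ k * B" if "k \<le> N" for k
    using that
  proof (induction k rule: less_induct)
    case (less k)
    consider "k = 0" | "k = 1" | "2 \<le> k" by linarith
    then show ?case
    proof cases
      case 2
      then show ?thesis
        using \<open>x 1 \<le> B\<close> mult_right_mono[OF \<open>1 \<le> t\<close> \<open>0 \<le> B\<close>] by simp
    next
      case 3
      then show ?thesis
        using L_step[of k] less x_le_L[of k] by simp
    qed (use \<open>x 0 \<le> B\<close> in simp)
  qed
  with L_step assms show ?thesis
    unfolding t_def by simp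
qed

theorem lemma1:
  fixes a0 a1 a2 dt :: real and x y z b :: "nat \<Rightarrow> real"
  assumes "a0 \<ge> 0" and "a1 \<ge> 0" and "a2 \<ge> 0" and "a1 \<ge> a2"
    and "dt > 0" and "a0 = 0 \<or> dt \<le> 3 / (4 * a0)"
    and "\<And>n. x n \<ge> 0"
    and "\<And>n. n \<ge> 1 \<Longrightarrow> y n \<ge> 0"
    and "\<And>n. n \<ge> 2 \<Longrightarrow> z n \<ge> 0"
    and "\<And>n. n \<ge> 2 \<Longrightarrow> b n \<ge> 0"
    and "\<And>n. n \<ge> 2 \<Longrightarrow>
      (1 / dt) * (3/2 * x n - 2 * x (n - 1) + 1/2 * x (n - 2) + y n - y (n - 1)) + z n
        \<le> a0 * x n + a1 * x (n - 1) + a2 * x (n - 2) + b n"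
  shows "\<And>n. n \<ge> 2 \<Longrightarrow>
      x n + 2/3 * y n + 2/3 * dt * (\<Sum>i=2..n. z i)
        \<le> (exp (2 * (a0 + a1 + a2) * real n * dt) + 1)
           * (x 0 + 3/2 * x 1 + y 1 + dt * (\<Sum>i=2..n. b i))"
proof -
  fix N :: nat assume "N \<ge> 2"
  define g where "g = a0 * dt"
  define \<alpha> where "\<alpha> = (a0 + a1 + a2) * dt"
  define B where "B = x 0 + 3/2 * x 1 + y 1 + dt * (\<Sum>i=2..N. b i)"
  define L where "L n = x n + 2/3 * (y n + dt * (\<Sum>i=2..n. z i))" for n
  have "g \<le> 3/4"
    using assms(1,6) unfolding g_def by (cases "a0 = 0") (auto simp: le_divide_eq algebra_simps)
  have "g \<le> \<alpha>" "0 \<le> g"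
    unfolding g_def \<alpha>_def using assms(1-3,5) by auto
  have "0 \<le> dt * (\<Sum>i=2..N. b i)"
    using assms(5,10) by (intro mult_nonneg_nonneg sum_nonneg) auto
  then have "0 \<le> B" "x 0 \<le> B" "x 1 \<le> B"
    unfolding B_def using assms(7)[of 0] assms(7)[of 1] assms(8)[of 1] by auto
  have x_le_L: "x n \<le> L n" if "2 \<le> n" for n
  proof -
    have "0 \<le> y n + dt * (\<Sum>i=2..n. z i)"
      using assms(5,8,9) that by (intro add_nonneg_nonneg mult_nonneg_nonneg sum_nonneg) auto
    then show ?thesis
      unfolding L_def by simp
  qed
  have "(3/2 - g) * L n \<le> 1/2 * x (n - 1) + B + \<alpha> * (\<Sum>i<n. x i)"
    if "2 \<le> n" "n \<le> N" for n
  proof -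
    have "g * x n \<le> g * L n"
      using x_le_L that \<open>0 \<le> g\<close> by (intro mult_left_mono) auto
    moreover have "(3/2 - g) * L n = 3/2 * x n + y n + dt * (\<Sum>i=2..n. z i) - g * L n"
      unfolding L_def by (simp add: field_simps)
    ultimately show ?thesis
      using bdf2_telescoped[OF assms(1-3,5,7,10,11), of n N] that
      unfolding B_def g_def \<alpha>_def by simp
  qed
  from bdf2_gronwall[OF \<open>0 \<le> g\<close> \<open>g \<le> 3/4\<close> \<open>g \<le> \<alpha>\<close> \<open>0 \<le> B\<close> \<open>x 0 \<le> B\<close> \<open>x 1 \<le> B\<close> x_le_L this]
  have "L N \<le> exp (2 * \<alpha>) ^ N * B"
    using \<open>N \<ge> 2\<close> by simp
  also have "exp (2 * \<alpha>) ^ N = exp (2 * (a0 + a1 + a2) * real N * dt)"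
    unfolding \<alpha>_def exp_of_nat_mult[symmetric] by (simp add: algebra_simps)
  finally show "x N + 2/3 * y N + 2/3 * dt * (\<Sum>i=2..N. z i)
      \<le> (exp (2 * (a0 + a1 + a2) * real N * dt) + 1) * (x 0 + 3/2 * x 1 + y 1 + dt * (\<Sum>i=2..N. b i))"
    using \<open>0 \<le> B\<close> unfolding L_def B_def[symmetric] by (simp add: algebra_simps)
qed

end
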